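(* Let $\rho$ be an $i$-polymatroid on $E$ with $i$-dual $\rho^*$, and assume that for every $e\in E$: (1) $\rho(E-e)=\rho(E)$ (equivalently $\rho^*(e)=i$), and (2) $\rho^*(E-e)=\rho^*(E)$ (equivalently $\rho(e)=i$). Then for each positive integer $k$ the map $\phi:\Delta_\rho^k\to\Delta_{\rho^*}^k$ given by $\phi((M_1,\dots,M_k))=(M'_1,\dots,M'_k)$, where $M'_s=(M_s\backslash L_s)^*\oplus U_{0,L_s}$ and $L_s$ is the set of loops of $M_s$, is a bijection. Consequently $\chi(\rho;x)=\chi(\rho^*;x)$.
   Context: A polymatroid on $E$ is a function $\rho:2^E\to\mathbb{Z}$ that is normalized, non-decreasing and submodular; it is an $i$-polymatroid if $\rho(\{e\})\le i$ for all $e$. Its $i$-dual is $\rho^*(X)=i|X|-\rho(E)+\rho(E-X)$. $\Delta_\rho^k$ is the set of $k$-tuples $(N_1,\dots,N_k)$ of matroids on $E$ with $\rho=r_{N_1}+\cdots+r_{N_k}$. $U_{0,L}$ is the rank-$0$ matroid on $L$. The chromatic polynomial $\chi(\rho;x)$ is the polynomial whose value at each positive integer $k$ is $|\Delta_\rho^k|$. *)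

theory Defs
  imports Main "HOL-Computational_Algebra.Polynomial"
begin

definition polymatroid :: "'a set \<Rightarrow> ('a set \<Rightarrow> int) \<Rightarrow> bool" where
  "polymatroid E \<rho> \<longleftrightarrow>
     \<rho> {} = 0 \<and>
     (\<forall>X Y. X \<subseteq> Y \<and> Y \<subseteq> E \<longrightarrow> \<rho> X \<le> \<rho> Y) \<and>
     (\<forall>X Y. X \<subseteq> E \<and> Y \<subseteq> E \<longrightarrow> \<rho> (X \<union> Y) + \<rho> (X \<inter> Y) \<le> \<rho> X + \<rho> Y)"

definition i_polymatroid :: "nat \<Rightarrow> 'a set \<Rightarrow> ('a set \<Rightarrow> int) \<Rightarrow> bool" where
  "i_polymatroid i E \<rho> \<longleftrightarrow> polymatroid E \<rho> \<and> (\<forall>e\<in>E. \<rho> {e} \<le> int i)"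

definition i_dual :: "nat \<Rightarrow> 'a set \<Rightarrow> ('a set \<Rightarrow> int) \<Rightarrow> ('a set \<Rightarrow> int)" where
  "i_dual i E \<rho> = (\<lambda>X. int i * int (card X) - \<rho> E + \<rho> (E - X))"

text \<open>A matroid on ground set E is represented by its rank function; to make the
representation canonical we require r X = r (X \<inter> E) for all X.\<close>

definition matroid_rank :: "'a set \<Rightarrow> ('a set \<Rightarrow> nat) \<Rightarrow> bool" where
  "matroid_rank E r \<longleftrightarrow>
     (\<forall>X. r X = r (X \<inter> E)) \<and>
     (\<forall>X. X \<subseteq> E \<longrightarrow> r X \<le> card X) \<and>
     (\<forall>X Y. X \<subseteq> Y \<and> Y \<subseteq> E \<longrightarrow> r X \<le> r Y) \<and>
     (\<forall>X Y. X \<subseteq> E \<and> Y \<subseteq> E \<longrightarrow> r (X \<union> Y) + r (X \<inter> Y) \<le> r X + r Y)"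

definition loops :: "'a set \<Rightarrow> ('a set \<Rightarrow> nat) \<Rightarrow> 'a set" where
  "loops E r = {e \<in> E. r {e} = 0}"

definition mdelete :: "'a set \<Rightarrow> ('a set \<Rightarrow> nat) \<Rightarrow> 'a set \<Rightarrow> ('a set \<Rightarrow> nat)" where
  "mdelete G r L = (\<lambda>X. r (X \<inter> (G - L)))"

definition mdual :: "'a set \<Rightarrow> ('a set \<Rightarrow> nat) \<Rightarrow> ('a set \<Rightarrow> nat)" where
  "mdual G r = (\<lambda>X. card (X \<inter> G) + r (G - X) - r G)"

definition U0 :: "'a set \<Rightarrow> ('a set \<Rightarrow> nat)" where
  "U0 L = (\<lambda>X. 0)"

definition direct_sum :: "'a set \<Rightarrow> ('a set \<Rightarrow> nat) \<Rightarrow> 'a set \<Rightarrow> ('a set \<Rightarrow> nat) \<Rightarrow> ('a set \<Rightarrow> nat)" where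
  "direct_sum G1 r1 G2 r2 = (\<lambda>X. r1 (X \<inter> G1) + r2 (X \<inter> G2))"

definition phi_matroid :: "'a set \<Rightarrow> ('a set \<Rightarrow> nat) \<Rightarrow> ('a set \<Rightarrow> nat)" where
  "phi_matroid E r =
     (let L = loops E r in
      direct_sum (E - L) (mdual (E - L) (mdelete E r L)) L (U0 L))"

definition phi :: "'a set \<Rightarrow> ('a set \<Rightarrow> nat) list \<Rightarrow> ('a set \<Rightarrow> nat) list" where
  "phi E Ms = map (phi_matroid E) Ms"

definition Delta :: "'a set \<Rightarrow> ('a set \<Rightarrow> int) \<Rightarrow> nat \<Rightarrow> ('a set \<Rightarrow> nat) list set" where
  "Delta E \<rho> k = {Ns. length Ns = k \<and> (\<forall>N\<in>set Ns. matroid_rank E N) \<and>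
                     (\<forall>X. X \<subseteq> E \<longrightarrow> \<rho> X = (\<Sum>N\<leftarrow>Ns. int (N X)))}"

definition chrom_poly :: "'a set \<Rightarrow> ('a set \<Rightarrow> int) \<Rightarrow> rat poly" where
  "chrom_poly E \<rho> = (THE p. \<forall>k::nat. k > 0 \<longrightarrow> poly p (of_nat k) = of_nat (card (Delta E \<rho> k)))"

end

theory Submission
  imports Defs
begin

text \<open>
  Write \<open>r\<close> for the rank function of a matroid \<open>M\<close> on \<open>E\<close> with loops \<open>L\<close>.
  Loops do not change ranks, so the rank of \<open>M' = (M \ L)\<^sup>* \<oplus> U\<^sub>0\<^sub>,\<^sub>L\<close> is
  \<open>r'(X) = |X - L| + r(E - X) - r(E)\<close>. If \<open>M\<close> has no coloops, then \<open>r'(e) = r(e)\<close>,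
  so \<open>M'\<close> has the same loops as \<open>M\<close>, and applying the formula twice gives \<open>M'' = M\<close>.
  If \<open>\<rho> = r\<^sub>1 + \<dots> + r\<^sub>k\<close> and \<open>\<rho>(E - e) = \<rho>(E)\<close>, monotonicity forces every
  \<open>r\<^sub>s(E - e) = r\<^sub>s(E)\<close>, so no \<open>M\<^sub>s\<close> has coloops. Summing the formula over \<open>s\<close>,
  and using \<open>|X - L\<^sub>s| = \<Sum>\<^sub>e\<^sub>\<in>\<^sub>X r\<^sub>s(e)\<close> and \<open>\<rho>(e) = i\<close>, gives
  \<open>r'\<^sub>1 + \<dots> + r'\<^sub>k = \<rho>\<^sup>*\<close>. As \<open>\<rho>\<^sup>*\<^sup>* = \<rho>\<close>, the same holds with the roles of
  \<open>\<rho>\<close> and \<open>\<rho>\<^sup>*\<close> exchanged, so \<open>\<phi>\<close> is an involution between the two sets of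
  decompositions, which therefore have equal size for every \<open>k\<close>.
\<close>

context
  fixes E :: "'a set" and r :: "'a set \<Rightarrow> nat"
  assumes matroid: "matroid_rank E r"
begin

lemma matroid_rank_inter_ground: "r X = r (X \<inter> E)"
  using matroid unfolding matroid_rank_def by (elim conjE) (erule spec)

lemma matroid_rank_le_card: "X \<subseteq> E \<Longrightarrow> r X \<le> card X"
  using matroid unfolding matroid_rank_def by (elim conjE) (erule allE, erule mp)

lemma matroid_rank_mono: "X \<subseteq> Y \<Longrightarrow> Y \<subseteq> E \<Longrightarrow> r X \<le> r Y"
  using matroid unfolding matroid_rank_def
  by (elim conjE) (drule spec[of _ X], drule spec[of _ Y], erule mp, rule conjI)

lemma matroid_rank_submod: "X \<subseteq> E \<Longrightarrow> Y \<subseteq> E \<Longrightarrow> r (X \<union> Y) + r (X \<inter> Y) \<le> r X + r Y"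
  using matroid unfolding matroid_rank_def
  by (elim conjE) (drule spec[of _ X], drule spec[of _ Y], erule mp, rule conjI)

lemma matroid_rank_empty: "r {} = 0"
  using matroid_rank_le_card[of "{}"] by simp

lemma matroid_rank_Un_le: "X \<subseteq> E \<Longrightarrow> Y \<subseteq> E \<Longrightarrow> r (X \<union> Y) \<le> r X + r Y"
  using matroid_rank_submod[of X Y] by linarith

lemma matroid_rank_singleton_le: "e \<in> E \<Longrightarrow> r {e} \<le> 1"
  using matroid_rank_le_card[of "{e}"] by simp

lemma matroid_rank_Un_loops: "finite F \<Longrightarrow> F \<subseteq> loops E r \<Longrightarrow> Z \<subseteq> E \<Longrightarrow> r (Z \<union> F) = r Z"
proof (induction F rule: finite_induct)
  case empty
  then show ?case by simp
next
  case (insert l F)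
  have l: "l \<in> E" "r {l} = 0" and F: "F \<subseteq> E"
    using insert.prems unfolding loops_def by auto
  have "r (Z \<union> F \<union> {l}) \<le> r (Z \<union> F) + r {l}"
    using matroid_rank_Un_le[of "Z \<union> F" "{l}"] l F insert.prems by auto
  moreover have "r (Z \<union> F) \<le> r (Z \<union> F \<union> {l})"
    using matroid_rank_mono[of "Z \<union> F" "Z \<union> F \<union> {l}"] l F insert.prems by auto
  ultimately have "r (Z \<union> F \<union> {l}) = r (Z \<union> F)" using l by linarith
  then show ?case using insert by simp
qed

context
  assumes finite_ground: "finite E"
begin

lemma matroid_rank_Diff_loops:
  assumes "Y \<subseteq> E"
  shows "r (Y - loops E r) = r Y"
proof -
  have "r ((Y - loops E r) \<union> (Y \<inter> loops E r)) = r (Y - loops E r)"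
    using assms finite_ground by (intro matroid_rank_Un_loops) (auto intro: finite_subset)
  then show ?thesis by (simp add: Un_Diff_Int)
qed

lemma card_Diff_loops: "card (X \<inter> E - loops E r) = (\<Sum>e\<in>X \<inter> E. r {e})"
proof -
  have "(\<Sum>e\<in>X \<inter> E. r {e}) = (\<Sum>e\<in>X \<inter> E - loops E r. r {e})"
    using finite_ground by (intro sum.mono_neutral_right) (auto simp: loops_def)
  also have "\<dots> = (\<Sum>e\<in>X \<inter> E - loops E r. 1)"
    by (intro sum.cong) (auto simp: loops_def dest: matroid_rank_singleton_le)
  finally show ?thesis by simp
qed

lemma phi_matroid_eq: "phi_matroid E r X + r E = card (X \<inter> E - loops E r) + r (E - X)"
proof -
  define L where "L = loops E r"
  have "phi_matroid E r X
      = card (X \<inter> (E - L) \<inter> (E - L)) + r ((E - L - X \<inter> (E - L)) \<inter> (E - L)) - r ((E - L) \<inter> (E - L)) + 0"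
    unfolding phi_matroid_def L_def[symmetric] Let_def direct_sum_def mdual_def mdelete_def U0_def ..
  moreover have "(E - L - X \<inter> (E - L)) \<inter> (E - L) = (E - X) - L" "X \<inter> (E - L) \<inter> (E - L) = X \<inter> E - L"
    "(E - L) \<inter> (E - L) = E - L" by blast+
  ultimately have "phi_matroid E r X = card (X \<inter> E - L) + r (E - X) - r E"
    using matroid_rank_Diff_loops[of "E - X"] matroid_rank_Diff_loops[of E] by (simp add: L_def)
  moreover have "r E \<le> r (E - X) + card (X \<inter> E - L)"
    \<comment> \<open>so the truncated subtraction of \<open>mdual\<close> is exact\<close>
  proof -
    have "r E \<le> r (E - X) + r (X \<inter> E)"
      using matroid_rank_Un_le[of "E - X" "X \<inter> E"] by (simp add: Un_Diff_Int Int_commute)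
    also have "r (X \<inter> E) = r (X \<inter> E - L)"
      unfolding L_def by (simp add: matroid_rank_Diff_loops)
    also have "\<dots> \<le> card (X \<inter> E - L)"
      by (rule matroid_rank_le_card) auto
    finally show ?thesis by simp
  qed
  ultimately show ?thesis unfolding L_def by simp
qed

lemma phi_matroid_eq_sum:
  assumes "X \<subseteq> E"
  shows "int (phi_matroid E r X) = (\<Sum>e\<in>X. int (r {e})) + int (r (E - X)) - int (r E)"
proof -
  have "X \<inter> E = X" using assms by blast
  then have "phi_matroid E r X + r E = (\<Sum>e\<in>X. r {e}) + r (E - X)"
    using phi_matroid_eq[of X] card_Diff_loops[of X] by simp
  then show ?thesis by (simp add: algebra_simps flip: of_nat_add of_nat_sum)
qed

lemma matroid_rank_phi_matroid: "matroid_rank E (phi_matroid E r)"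
proof -
  define L where "L = loops E r"
  define p where "p = phi_matroid E r"
  have p_eq: "p X + r E = card (X \<inter> E - L) + r (E - X)" for X
    unfolding p_def L_def by (rule phi_matroid_eq)
  have finite_nonloops: "finite (X \<inter> E - L)" for X
    using finite_ground by blast
  have ground: "p X = p (X \<inter> E)" for X
  proof -
    have "X \<inter> E \<inter> E - L = X \<inter> E - L" "E - X \<inter> E = E - X" by blast+
    then show ?thesis using p_eq[of X] p_eq[of "X \<inter> E"] by simp
  qed
  have le_card: "p X \<le> card X" if "X \<subseteq> E" for X
  proof -
    have "card (X \<inter> E - L) \<le> card X"
      using that finite_ground by (intro card_mono) (auto intro: finite_subset)
    moreover have "r (E - X) \<le> r E" by (rule matroid_rank_mono) auto
    ultimately show ?thesis using p_eq[of X] by linarith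
  qed
  have mono: "p X \<le> p Y" if "X \<subseteq> Y" "Y \<subseteq> E" for X Y
  proof -
    have "E - X = (E - Y) \<union> (Y - X)" using that by blast
    then have "r (E - X) \<le> r (E - Y) + r (Y - X)"
      using matroid_rank_Un_le[of "E - Y" "Y - X"] that by auto
    also have "r (Y - X) = r (Y - X - L)"
      unfolding L_def using that by (intro matroid_rank_Diff_loops[symmetric]) auto
    also have "\<dots> \<le> card (Y - X - L)"
      using that by (intro matroid_rank_le_card) auto
    finally have "r (E - X) \<le> r (E - Y) + card (Y - X - L)" by simp
    moreover have "card (Y \<inter> E - L) = card (X \<inter> E - L) + card (Y - X - L)"
    proof -
      have "X \<inter> E - L \<subseteq> Y \<inter> E - L" "Y - X - L = (Y \<inter> E - L) - (X \<inter> E - L)"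
        using that by blast+
      then show ?thesis
        using finite_nonloops card_mono[OF finite_nonloops] by (simp add: card_Diff_subset)
    qed
    ultimately show ?thesis using p_eq[of X] p_eq[of Y] by linarith
  qed
  have submod: "p (X \<union> Y) + p (X \<inter> Y) \<le> p X + p Y" if "X \<subseteq> E" "Y \<subseteq> E" for X Y
  proof -
    have "(X \<union> Y) \<inter> E - L = (X \<inter> E - L) \<union> (Y \<inter> E - L)"
      "(X \<inter> Y) \<inter> E - L = (X \<inter> E - L) \<inter> (Y \<inter> E - L)" by blast+
    then have "card ((X \<union> Y) \<inter> E - L) + card ((X \<inter> Y) \<inter> E - L) = card (X \<inter> E - L) + card (Y \<inter> E - L)"
      using card_Un_Int[OF finite_nonloops[of X] finite_nonloops[of Y]] by simp
    moreover have "E - (X \<union> Y) = (E - X) \<inter> (E - Y)" "E - (X \<inter> Y) = (E - X) \<union> (E - Y)" by blast+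
    then have "r (E - (X \<union> Y)) + r (E - (X \<inter> Y)) \<le> r (E - X) + r (E - Y)"
      using matroid_rank_submod[of "E - X" "E - Y"] by simp
    ultimately show ?thesis
      using p_eq[of X] p_eq[of Y] p_eq[of "X \<union> Y"] p_eq[of "X \<inter> Y"] by linarith
  qed
  show ?thesis
    unfolding matroid_rank_def p_def[symmetric] using ground le_card mono submod by blast
qed

lemma loops_phi_matroid:
  assumes "\<forall>e\<in>E. r (E - {e}) = r E"
  shows "loops E (phi_matroid E r) = loops E r"
proof -
  have "phi_matroid E r {e} = r {e}" if "e \<in> E" for e
    using phi_matroid_eq_sum[of "{e}"] assms that by simp
  then show ?thesis unfolding loops_def by auto
qed

end
end

lemma phi_matroid_involution:
  assumes matroid: "matroid_rank E r" and finite_ground: "finite E"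
    and no_coloops: "\<forall>e\<in>E. r (E - {e}) = r E"
  shows "phi_matroid E (phi_matroid E r) = r"
proof
  fix X
  define L where "L = loops E r"
  define p where "p = phi_matroid E r"
  have "matroid_rank E p" "loops E p = L"
    unfolding p_def L_def using assms by (simp_all add: matroid_rank_phi_matroid loops_phi_matroid)
  then have pp_eq: "phi_matroid E p X + p E = card (X \<inter> E - L) + p (E - X)"
    using phi_matroid_eq[of E p X] finite_ground by simp
  have "E - (E - X) = X \<inter> E" "(E - X) \<inter> E = E - X" by blast+
  then have p_compl: "p (E - X) + r E = card (E - X - L) + r (X \<inter> E)"
    unfolding p_def L_def using phi_matroid_eq[OF matroid finite_ground, of "E - X"] by simp
  have p_ground: "p E + r E = card (E - L)"
    unfolding p_def L_def using phi_matroid_eq[OF matroid finite_ground, of E]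
    by (simp add: matroid_rank_empty[OF matroid])
  have "card ((X \<inter> E - L) \<union> (E - X - L)) = card (X \<inter> E - L) + card (E - X - L)"
    using finite_ground by (intro card_Un_disjoint) auto
  moreover have "(X \<inter> E - L) \<union> (E - X - L) = E - L" by blast
  ultimately have "card (E - L) = card (X \<inter> E - L) + card (E - X - L)" by simp
  then have "phi_matroid E p X = r (X \<inter> E)"
    using pp_eq p_compl p_ground by linarith
  then show "phi_matroid E (phi_matroid E r) X = r X"
    unfolding p_def using matroid_rank_inter_ground[OF matroid] by simp
qed

lemma sum_list_mono_eq_imp_eq:
  fixes f g :: "'b \<Rightarrow> 'c::ordered_cancel_comm_monoid_add"
  assumes "\<And>x. x \<in> set xs \<Longrightarrow> f x \<le> g x" "(\<Sum>x\<leftarrow>xs. f x) = (\<Sum>x\<leftarrow>xs. g x)"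
  shows "\<forall>x\<in>set xs. f x = g x"
  using assms
proof (induction xs)
  case Nil
  then show ?case by simp
next
  case (Cons a xs)
  define F G where "F = (\<Sum>x\<leftarrow>xs. f x)" and "G = (\<Sum>x\<leftarrow>xs. g x)"
  have "f a \<le> g a" "F \<le> G"
    unfolding F_def G_def using Cons.prems(1) by (auto intro: sum_list_mono)
  moreover have sum_eq: "f a + F = g a + G"
    unfolding F_def G_def using Cons.prems(2) by simp
  ultimately have "f a + F \<le> f a + G" "f a + G \<le> f a + F"
    by (metis add_left_mono, metis add_right_mono)
  then have "f a + F = f a + G" by (rule antisym)
  then have "F = G" by simp
  moreover from this have "f a = g a" using sum_eq by simp
  moreover have "\<forall>x\<in>set xs. f x = g x"
    using Cons.IH Cons.prems(1) \<open>F = G\<close> unfolding F_def G_def by simp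
  ultimately show ?case by simp
qed

lemma sum_list_sum_commute:
  "(\<Sum>N\<leftarrow>Ns. \<Sum>e\<in>A. f N e) = (\<Sum>e\<in>A. \<Sum>N\<leftarrow>Ns. f N e)"
  by (induction Ns) (simp_all add: sum.distrib)

lemma Delta_cong:
  assumes "\<And>X. X \<subseteq> E \<Longrightarrow> \<sigma> X = \<tau> X"
  shows "Delta E \<sigma> k = Delta E \<tau> k"
  using assms unfolding Delta_def by auto

lemma Delta_no_coloops:
  assumes Ns: "Ns \<in> Delta E \<sigma> k" and "e \<in> E" "\<sigma> (E - {e}) = \<sigma> E" and N: "N \<in> set Ns"
  shows "N (E - {e}) = N E"
proof -
  have matroids: "\<forall>N\<in>set Ns. matroid_rank E N"
    and sum: "\<forall>X. X \<subseteq> E \<longrightarrow> \<sigma> X = (\<Sum>N\<leftarrow>Ns. int (N X))"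
    using Ns unfolding Delta_def by auto
  have "\<forall>N\<in>set Ns. int (N (E - {e})) = int (N E)"
  proof (rule sum_list_mono_eq_imp_eq)
    show "int (N (E - {e})) \<le> int (N E)" if "N \<in> set Ns" for N
      using matroids that by (auto intro: matroid_rank_mono)
    show "(\<Sum>N\<leftarrow>Ns. int (N (E - {e}))) = (\<Sum>N\<leftarrow>Ns. int (N E))"
      using sum[rule_format, of "E - {e}"] sum[rule_format, of E] assms(3) by auto
  qed
  then show ?thesis using N by simp
qed

lemma phi_in_Delta_i_dual:
  assumes finite_ground: "finite E" and singletons: "\<forall>e\<in>E. \<sigma> {e} = int i"
    and Ns: "Ns \<in> Delta E \<sigma> k"
  shows "phi E Ns \<in> Delta E (i_dual i E \<sigma>) k"
proof -
  have matroids: "\<forall>N\<in>set Ns. matroid_rank E N"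
    and sum: "\<forall>X. X \<subseteq> E \<longrightarrow> \<sigma> X = (\<Sum>N\<leftarrow>Ns. int (N X))"
    using Ns unfolding Delta_def by auto
  have "i_dual i E \<sigma> X = (\<Sum>N\<leftarrow>Ns. int (phi_matroid E N X))" if X: "X \<subseteq> E" for X
  proof -
    have "(\<Sum>N\<leftarrow>Ns. int (phi_matroid E N X))
        = (\<Sum>N\<leftarrow>Ns. (\<Sum>e\<in>X. int (N {e})) + int (N (E - X)) - int (N E))"
      using matroids finite_ground X by (intro arg_cong[where f = sum_list] map_cong)
        (simp_all add: phi_matroid_eq_sum)
    also have "\<dots> = (\<Sum>e\<in>X. \<Sum>N\<leftarrow>Ns. int (N {e})) + (\<Sum>N\<leftarrow>Ns. int (N (E - X))) - (\<Sum>N\<leftarrow>Ns. int (N E))"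
      by (simp add: sum_list_addf sum_list_subtractf sum_list_sum_commute)
    also have "\<dots> = (\<Sum>e\<in>X. \<sigma> {e}) + \<sigma> (E - X) - \<sigma> E"
      using sum X by (simp add: subset_eq)
    also have "(\<Sum>e\<in>X. \<sigma> {e}) = int i * int (card X)"
      using singletons X by (simp add: subset_eq)
    finally show ?thesis unfolding i_dual_def by simp
  qed
  then show ?thesis
    using Ns matroid_rank_phi_matroid[OF _ finite_ground] unfolding Delta_def phi_def by (auto simp: comp_def)
qed

lemma phi_phi_Delta:
  assumes "finite E" and no_coloops: "\<forall>e\<in>E. \<sigma> (E - {e}) = \<sigma> E" and Ns: "Ns \<in> Delta E \<sigma> k"
  shows "phi E (phi E Ns) = Ns"
proof -
  have "phi_matroid E (phi_matroid E N) = N" if N: "N \<in> set Ns" for N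
  proof (rule phi_matroid_involution)
    show "matroid_rank E N" using Ns N unfolding Delta_def by auto
    show "\<forall>e\<in>E. N (E - {e}) = N E" using Delta_no_coloops[OF Ns _ _ N] no_coloops by blast
  qed fact
  then show ?thesis unfolding phi_def by (simp add: map_idI)
qed

lemma i_dual_singleton_eq_iff: "i_dual i E \<rho> {e} = int i \<longleftrightarrow> \<rho> (E - {e}) = \<rho> E"
  by (simp add: i_dual_def)

lemma i_dual_Diff_singleton_eq_iff:
  assumes "finite E" "e \<in> E" "\<rho> {} = 0"
  shows "i_dual i E \<rho> (E - {e}) = i_dual i E \<rho> E \<longleftrightarrow> \<rho> {e} = int i"
proof -
  have "int (card E) = int (card (E - {e})) + 1"
    using card_Suc_Diff1[OF assms(1,2)] by linarith
  moreover have "E - (E - {e}) = {e}"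
    using assms(2) by blast
  ultimately show ?thesis
    using assms(3) by (simp add: i_dual_def distrib_left)
qed

lemma i_dual_i_dual:
  assumes "finite E" "\<rho> {} = 0" "X \<subseteq> E"
  shows "i_dual i E (i_dual i E \<rho>) X = \<rho> X"
proof -
  have "int (card (E - X)) = int (card E) - int (card X)"
    using assms by (simp add: card_Diff_subset card_mono finite_subset of_nat_diff)
  moreover have "E - (E - X) = X"
    using assms(3) by blast
  ultimately show ?thesis
    using assms(2) by (simp add: i_dual_def right_diff_distrib)
qed

lemma phi_bij_betw_Delta_i_dual:
  assumes "finite E" "\<sigma> {} = 0"
    and no_coloops: "\<forall>e\<in>E. \<sigma> (E - {e}) = \<sigma> E"
    and singletons: "\<forall>e\<in>E. \<sigma> {e} = int i"
  shows "bij_betw (phi E) (Delta E \<sigma> k) (Delta E (i_dual i E \<sigma>) k)"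
proof (rule bij_betw_byWitness[where f' = "phi E"])
  have dual_singletons: "\<forall>e\<in>E. i_dual i E \<sigma> {e} = int i"
    using no_coloops by (simp add: i_dual_singleton_eq_iff)
  have dual_no_coloops: "\<forall>e\<in>E. i_dual i E \<sigma> (E - {e}) = i_dual i E \<sigma> E"
    using assms by (simp add: i_dual_Diff_singleton_eq_iff)
  have "Delta E (i_dual i E (i_dual i E \<sigma>)) k = Delta E \<sigma> k"
    using assms by (intro Delta_cong) (simp add: i_dual_i_dual)
  then show "phi E ` Delta E (i_dual i E \<sigma>) k \<subseteq> Delta E \<sigma> k"
    using phi_in_Delta_i_dual[OF \<open>finite E\<close> dual_singletons] by blast
  show "phi E ` Delta E \<sigma> k \<subseteq> Delta E (i_dual i E \<sigma>) k"
    using phi_in_Delta_i_dual[OF \<open>finite E\<close> singletons] by blast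
  show "\<forall>Ns\<in>Delta E \<sigma> k. phi E (phi E Ns) = Ns"
    using phi_phi_Delta[OF \<open>finite E\<close> no_coloops] by blast
  show "\<forall>Ns\<in>Delta E (i_dual i E \<sigma>) k. phi E (phi E Ns) = Ns"
    using phi_phi_Delta[OF \<open>finite E\<close> dual_no_coloops] by blast
qed

theorem corollary4p3:
  fixes E :: "'a set" and \<rho> :: "'a set \<Rightarrow> int" and i :: nat
  assumes "finite E"
    and "i_polymatroid i E \<rho>"
    and "\<forall>e\<in>E. \<rho> (E - {e}) = \<rho> E"
    and "\<forall>e\<in>E. i_dual i E \<rho> (E - {e}) = i_dual i E \<rho> E"
  shows "(\<forall>k::nat. k > 0 \<longrightarrow>
            bij_betw (phi E) (Delta E \<rho> k) (Delta E (i_dual i E \<rho>) k))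
         \<and> chrom_poly E \<rho> = chrom_poly E (i_dual i E \<rho>)"
proof -
  have empty: "\<rho> {} = 0"
    using assms(2) by (simp add: i_polymatroid_def polymatroid_def)
  have singletons: "\<forall>e\<in>E. \<rho> {e} = int i"
    using assms(1,4) empty by (simp add: i_dual_Diff_singleton_eq_iff)
  have bij: "bij_betw (phi E) (Delta E \<rho> k) (Delta E (i_dual i E \<rho>) k)" for k
    using assms(1) empty assms(3) singletons by (rule phi_bij_betw_Delta_i_dual)
  then have "card (Delta E \<rho> k) = card (Delta E (i_dual i E \<rho>) k)" for k
    by (rule bij_betw_same_card)
  then show ?thesis
    using bij unfolding chrom_poly_def by simp
qed

end
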